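(* Fix $\theta\in(0,1]$. For every integer $k\ge1$, $$\sup\Big\{\sup_{x\in\mathbb X}\frac{|(\widehat P_kf)(x)-(Pf)(x)|}{V(x)}:\ f:\mathbb X\to\mathbb C\ \text{measurable},\ \sup_{\mathbb X}|f|\le1\Big\}\ \le\ \tau_k:=2\max\Big(\frac1{v(k)},\ \alpha_k+\ell_{k,\theta}\,\delta_k^{\theta}\Big).$$
   Context: Let $(\mathbb X,d)$ be a metric space with Borel $\sigma$-algebra $\mathcal X$, $\mu$ a positive measure, and $P$ a Markov kernel $P(x,dy)=p(x,y)\,\mu(dy)$ with $p:\mathbb X^2\to[0,\infty)$ measurable, $\int p(x,y)\mu(dy)=1$; $(Pf)(x)=\int f(y)p(x,y)\mu(dy)$. Fix $x_0\in\mathbb X$. Let $v:[0,\infty)\to[1,\infty)$ be unbounded, increasing, continuous with $v(0)=1$, and $V(x):=v(d(x,x_0))$. For each integer $k\ge1$: $\delta_k>0$; $\mathbb X_k\in\mathcal X$ with $\{d(x,x_0)<k\}\subseteq\mathbb X_k\subseteq\{d(x,x_0)\le k\}$; $\{\mathbb X_{i,k}\}_{i\in I_k}$ a finite family of pairwise disjoint nonempty measurable sets with union $\mathbb X_k$ and $\mathrm{diam}(\mathbb X_{i,k})\le\delta_k$. Define $m_{i,k}(f):=\int_{\mathbb X_k}f(y)\inf_{t\in\mathbb X_{i,k}}p(t,y)\,\mu(dy)$, $(\widehat Q_kf)(x):=\sum_{i\in I_k}m_{i,k}(f)1_{\mathbb X_{i,k}}(x)$, $\psi_k:=1_{\mathbb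 X}-\widehat Q_k1_{\mathbb X}$, $\widehat P_kf:=\widehat Q_kf+f(x_0)\psi_k$. Let $\alpha_k:=\sup_{u\in\mathbb X_k}P(u,\mathbb X\setminus\mathbb X_k)/V(u)$, $L_{i,k,\theta}(y):=\sup\{|p(x,y)-p(x',y)|/d(x,x')^\theta:\ x,x'\in\mathbb X_{i,k},\ x\ne x'\}\in[0,\infty]$ for $y\in\mathbb X_k$, and $\ell_{k,\theta}:=\max_{i\in I_k}\int_{\mathbb X_k}L_{i,k,\theta}(y)\,\mu(dy)\in[0,\infty]$. *)

theory Defs
  imports "HOL-Analysis.Analysis"
begin

definition Pop :: "'a measure \<Rightarrow> ('a \<Rightarrow> 'a \<Rightarrow> real) \<Rightarrow> ('a \<Rightarrow> complex) \<Rightarrow> 'a \<Rightarrow> complex" where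
  "Pop M p f x = (\<integral>y. f y * complex_of_real (p x y) \<partial>M)"

definition Pker :: "'a measure \<Rightarrow> ('a \<Rightarrow> 'a \<Rightarrow> real) \<Rightarrow> 'a \<Rightarrow> 'a set \<Rightarrow> real" where
  "Pker M p u A = enn2real (\<integral>\<^sup>+y. ennreal (p u y) * indicator A y \<partial>M)"

definition mik :: "'a measure \<Rightarrow> ('a \<Rightarrow> 'a \<Rightarrow> real) \<Rightarrow> 'a set \<Rightarrow> 'a set \<Rightarrow> ('a \<Rightarrow> complex) \<Rightarrow> complex" where
  "mik M p Xk A f = (LINT y:Xk|M. f y * complex_of_real (INF t\<in>A. p t y))"

definition Qhat :: "'a measure \<Rightarrow> ('a \<Rightarrow> 'a \<Rightarrow> real) \<Rightarrow> 'a set \<Rightarrow> 'i set \<Rightarrow> ('i \<Rightarrow> 'a set)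
    \<Rightarrow> ('a \<Rightarrow> complex) \<Rightarrow> 'a \<Rightarrow> complex" where
  "Qhat M p Xk I Xp f x = (\<Sum>i\<in>I. mik M p Xk (Xp i) f * indicator (Xp i) x)"

definition psi :: "'a measure \<Rightarrow> ('a \<Rightarrow> 'a \<Rightarrow> real) \<Rightarrow> 'a set \<Rightarrow> 'i set \<Rightarrow> ('i \<Rightarrow> 'a set) \<Rightarrow> 'a \<Rightarrow> complex" where
  "psi M p Xk I Xp x = 1 - Qhat M p Xk I Xp (\<lambda>_. 1) x"

definition Phat :: "'a measure \<Rightarrow> ('a \<Rightarrow> 'a \<Rightarrow> real) \<Rightarrow> 'a \<Rightarrow> 'a set \<Rightarrow> 'i set \<Rightarrow> ('i \<Rightarrow> 'a set)
    \<Rightarrow> ('a \<Rightarrow> complex) \<Rightarrow> 'a \<Rightarrow> complex" where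
  "Phat M p x0 Xk I Xp f x = Qhat M p Xk I Xp f x + f x0 * psi M p Xk I Xp x"

definition alpha :: "'a measure \<Rightarrow> ('a \<Rightarrow> 'a \<Rightarrow> real) \<Rightarrow> ('a \<Rightarrow> real) \<Rightarrow> 'a set \<Rightarrow> real" where
  "alpha M p V Xk = (SUP u\<in>Xk. Pker M p u (UNIV - Xk) / V u)"

definition Lconst :: "('a::metric_space \<Rightarrow> 'a \<Rightarrow> real) \<Rightarrow> 'a set \<Rightarrow> real \<Rightarrow> 'a \<Rightarrow> ennreal" where
  "Lconst p A \<theta> y = (SUP xx'\<in>{(x, x'). x \<in> A \<and> x' \<in> A \<and> x \<noteq> x'}.
      ennreal (\<bar>p (fst xx') y - p (snd xx') y\<bar> / dist (fst xx') (snd xx') powr \<theta>))"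

definition ell :: "'a measure \<Rightarrow> ('a::metric_space \<Rightarrow> 'a \<Rightarrow> real) \<Rightarrow> 'a set \<Rightarrow> 'i set \<Rightarrow> ('i \<Rightarrow> 'a set) \<Rightarrow> real \<Rightarrow> ennreal" where
  "ell M p Xk I Xp \<theta> = Max ((\<lambda>i. \<integral>\<^sup>+y. Lconst p (Xp i) \<theta> y * indicator Xk y \<partial>M) ` I)"

end

theory Submission
  imports Defs
begin

text \<open>Outside \<open>X\<^sub>k\<close> the approximation is the constant \<open>f(x\<^sub>0)\<close>, so the error is at most \<open>2\<close>,
  while \<open>V \<ge> v(k)\<close> there. If \<open>x\<close> lies in the piece \<open>X\<^sub>i\<^sub>,\<^sub>k\<close>, then
  \<open>Phat\<^sub>k f(x) - P f(x) = f(x\<^sub>0) \<integral>h - \<integral>f h\<close> with the nonnegative defect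
  \<open>h = p(x,\<cdot>) - 1\<^bsub>X\<^sub>k\<^esub> inf\<^bsub>t\<in>X\<^sub>i\<^sub>,\<^sub>k\<^esub> p(t,\<cdot>)\<close>, so the error is at most \<open>2 \<integral>h\<close>.
  The mass of \<open>h\<close> outside \<open>X\<^sub>k\<close> is \<open>P(x, X - X\<^sub>k) \<le> \<alpha>\<^sub>k V(x)\<close>; inside \<open>X\<^sub>k\<close> the Hoelder
  bound \<open>p(x,y) - inf\<^sub>t p(t,y) \<le> L\<^sub>i\<^sub>,\<^sub>k\<^sub>,\<^sub>\<theta>(y) \<delta>\<^sub>k\<^sup>\<theta>\<close> integrates to at most \<open>\<ell>\<^sub>k\<^sub>,\<^sub>\<theta> \<delta>\<^sub>k\<^sup>\<theta>\<close>.\<close>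

lemma integrable_bounded_mult:
  fixes f :: "'a \<Rightarrow> complex"
  assumes [measurable]: "f \<in> borel_measurable M" and f_le: "\<And>y. cmod (f y) \<le> 1"
    and h: "integrable M h"
  shows "integrable M (\<lambda>y. f y * of_real (h y))"
proof (rule Bochner_Integration.integrable_bound[OF h])
  show "AE y in M. norm (f y * of_real (h y)) \<le> norm (h y)"
    using f_le by (intro AE_I2) (simp add: norm_mult mult_left_le_one_le)
qed (use h in measurable)

lemma norm_integral_bounded_mult_le:
  fixes f :: "'a \<Rightarrow> complex"
  assumes f: "f \<in> borel_measurable M" and f_le: "\<And>y. cmod (f y) \<le> 1"
    and h: "integrable M h" and h_nonneg: "\<And>y. 0 \<le> h y"
  shows "cmod (\<integral>y. f y * of_real (h y) \<partial>M) \<le> (\<integral>y. h y \<partial>M)"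
proof -
  have "cmod (\<integral>y. f y * of_real (h y) \<partial>M) \<le> (\<integral>y. cmod (f y * of_real (h y)) \<partial>M)"
    by (rule Bochner_Integration.integral_norm_bound)
  also have "\<dots> \<le> (\<integral>y. h y \<partial>M)"
    using f_le h_nonneg
    by (intro Bochner_Integration.integral_mono integrable_norm
          integrable_bounded_mult[OF f f_le h] h)
       (simp add: norm_mult mult_left_le_one_le)
  finally show ?thesis .
qed

lemma Qhat_outside_partition:
  "x \<notin> (\<Union>i\<in>I. Xp i) \<Longrightarrow> Qhat M p Xk I Xp f x = 0"
  unfolding Qhat_def by (intro sum.neutral) auto

lemma Phat_outside_partition:
  "x \<notin> (\<Union>i\<in>I. Xp i) \<Longrightarrow> Phat M p x0 Xk I Xp f x = f x0"
  by (simp add: Phat_def psi_def Qhat_outside_partition)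

lemma Qhat_on_piece:
  assumes "finite I" "disjoint_family_on Xp I" "i \<in> I" "x \<in> Xp i"
  shows "Qhat M p Xk I Xp f x = mik M p Xk (Xp i) f"
proof -
  have "Qhat M p Xk I Xp f x = (\<Sum>j\<in>I. if j = i then mik M p Xk (Xp i) f else 0)"
    unfolding Qhat_def using assms(2-4)
    by (intro sum.cong refl) (auto simp: indicator_def dest: disjoint_family_onD)
  also have "\<dots> = mik M p Xk (Xp i) f"
    using assms(1,3) by simp
  finally show ?thesis .
qed

lemma diff_INF_le_Lconst:
  fixes p :: "'a::metric_space \<Rightarrow> 'a \<Rightarrow> real"
  assumes xA: "x \<in> A" and diam: "\<And>a b. a \<in> A \<Longrightarrow> b \<in> A \<Longrightarrow> dist a b \<le> d"
    and d: "0 < d" and \<theta>: "0 < \<theta>" and nonneg: "\<And>t. 0 \<le> p t y"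
  shows "ennreal ((p x y - (INF t\<in>A. p t y)) / d powr \<theta>) \<le> Lconst p A \<theta> y"
proof (cases "Lconst p A \<theta> y" rule: ennreal_cases)
  case (real L)
  have d_pos: "0 < d powr \<theta>" using d by simp
  have "p x y - L * d powr \<theta> \<le> p t y" if t: "t \<in> A" for t
  proof (cases "t = x")
    case True
    then show ?thesis using real d_pos by simp
  next
    case False
    then have dist_pos: "0 < dist x t" by simp
    have "ennreal (\<bar>p x y - p t y\<bar> / dist x t powr \<theta>) \<le> Lconst p A \<theta> y"
      unfolding Lconst_def using False xA t
      by (intro SUP_upper2[where i = "(x, t)"]) auto
    then have "\<bar>p x y - p t y\<bar> \<le> L * dist x t powr \<theta>"
      using real dist_pos by (simp add: ennreal_le_iff divide_le_eq)
    also have "\<dots> \<le> L * d powr \<theta>"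
      using real diam[OF xA t] \<theta> dist_pos by (intro mult_left_mono powr_mono2) auto
    finally show ?thesis by linarith
  qed
  then have "p x y - L * d powr \<theta> \<le> (INF t\<in>A. p t y)"
    using xA by (intro cINF_greatest) auto
  then have "(p x y - (INF t\<in>A. p t y)) / d powr \<theta> \<le> L"
    using d_pos by (simp add: divide_le_eq algebra_simps)
  then show ?thesis using real by (simp add: ennreal_leI)
qed simp

definition minorant_defect :: "('a \<Rightarrow> 'a \<Rightarrow> real) \<Rightarrow> 'a set \<Rightarrow> 'a set \<Rightarrow> 'a \<Rightarrow> 'a \<Rightarrow> real" where
  "minorant_defect p Xk A x y = p x y - indicator Xk y * (INF t\<in>A. p t y)"

locale markov_density =
  fixes M :: "'a measure" and p :: "'a \<Rightarrow> 'a \<Rightarrow> real"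
  assumes density_measurable [measurable]: "\<And>x. p x \<in> borel_measurable M"
    and density_nonneg: "\<And>x y. 0 \<le> p x y"
    and density_prob: "\<And>x. (\<integral>\<^sup>+y. ennreal (p x y) \<partial>M) = 1"
begin

lemma integrable_density: "integrable M (p x)"
  by (rule integrableI_nonneg) (auto simp: density_nonneg density_prob)

lemma integral_density: "(\<integral>y. p x y \<partial>M) = 1"
  by (subst integral_eq_nn_integral) (auto simp: density_nonneg density_prob)

lemma integrable_dominated_by_density:
  "h \<in> borel_measurable M \<Longrightarrow> (\<And>y. \<bar>h y\<bar> \<le> p x y) \<Longrightarrow> integrable M h"
  by (rule Bochner_Integration.integrable_bound[OF integrable_density])
     (auto simp: abs_of_nonneg density_nonneg)

lemma Pker_eq_integral:
  assumes "A \<inter> space M \<in> sets M"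
  shows "Pker M p x A = (\<integral>y. indicator A y * p x y \<partial>M)"
proof -
  have [measurable]: "(indicator A :: 'a \<Rightarrow> real) \<in> borel_measurable M"
    using assms by (simp add: borel_measurable_indicator_iff)
  show ?thesis
    unfolding Pker_def
    by (subst integral_eq_nn_integral)
       (auto simp: density_nonneg intro!: arg_cong[where f = enn2real] nn_integral_cong
             split: split_indicator)
qed

lemma Pker_le_1: "Pker M p x A \<le> 1"
proof -
  have "(\<integral>\<^sup>+y. ennreal (p x y) * indicator A y \<partial>M) \<le> (\<integral>\<^sup>+y. ennreal (p x y) \<partial>M)"
    by (intro nn_integral_mono) (auto split: split_indicator)
  then show ?thesis
    unfolding Pker_def using density_prob[of x] by (intro enn2real_leI) auto
qed

lemma Pker_div_le_alpha:
  assumes V_ge1: "\<And>u. 1 \<le> V u" and "u \<in> Xk"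
  shows "Pker M p u (UNIV - Xk) / V u \<le> alpha M p V Xk"
  unfolding alpha_def
proof (rule cSUP_upper[OF \<open>u \<in> Xk\<close> bdd_aboveI2])
  fix w
  show "Pker M p w (UNIV - Xk) / V w \<le> 1"
    using Pker_le_1[of w "UNIV - Xk"] V_ge1[of w] by (simp add: divide_le_eq)
qed

lemma norm_Pop_le_1:
  assumes "f \<in> borel_measurable M" "\<And>y. cmod (f y) \<le> 1"
  shows "cmod (Pop M p f x) \<le> 1"
  using norm_integral_bounded_mult_le[OF assms integrable_density density_nonneg]
  by (simp add: Pop_def integral_density)

lemma norm_Phat_minus_Pop_outside_partition:
  assumes "f \<in> borel_measurable M" "\<And>y. cmod (f y) \<le> 1" "x \<notin> (\<Union>i\<in>I. Xp i)"
  shows "cmod (Phat M p x0 Xk I Xp f x - Pop M p f x) \<le> 2"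
  using norm_triangle_ineq4[of "f x0" "Pop M p f x"] norm_Pop_le_1[OF assms(1,2), of x]
    assms(2)[of x0]
  by (simp add: Phat_outside_partition[OF assms(3)])

lemma INF_density_nonneg: "x \<in> A \<Longrightarrow> 0 \<le> (INF t\<in>A. p t y)"
  by (intro cINF_greatest) (auto simp: density_nonneg)

lemma INF_density_le: "x \<in> A \<Longrightarrow> (INF t\<in>A. p t y) \<le> p x y"
  by (rule cINF_lower[OF bdd_belowI2[where m = 0]]) (auto simp: density_nonneg)

lemma minorant_defect_nonneg: "x \<in> A \<Longrightarrow> 0 \<le> minorant_defect p Xk A x y"
  using INF_density_le[of x A y] INF_density_nonneg[of x A y] density_nonneg[of x y]
  by (auto simp: minorant_defect_def indicator_def)

lemma integrable_minorant_defect: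
  assumes [measurable]: "Xk \<in> sets M" "(\<lambda>y. INF t\<in>A. p t y) \<in> borel_measurable M"
    and "x \<in> A"
  shows "integrable M (minorant_defect p Xk A x)"
proof (rule integrable_dominated_by_density)
  show "minorant_defect p Xk A x \<in> borel_measurable M"
    unfolding minorant_defect_def by measurable
  show "\<bar>minorant_defect p Xk A x y\<bar> \<le> p x y" for y
    using minorant_defect_nonneg[OF \<open>x \<in> A\<close>, of Xk y] INF_density_nonneg[of x A y] \<open>x \<in> A\<close>
    by (auto simp: minorant_defect_def indicator_def)
qed

lemma Phat_minus_Pop_on_piece:
  assumes Xk [measurable]: "Xk \<in> sets M"
    and I: "finite I" "disjoint_family_on Xp I" "i \<in> I" and x: "x \<in> Xp i"
    and g [measurable]: "(\<lambda>y. INF t\<in>Xp i. p t y) \<in> borel_measurable M"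
    and f [measurable]: "f \<in> borel_measurable M" and f_le: "\<And>y. cmod (f y) \<le> 1"
  shows "Phat M p x0 Xk I Xp f x - Pop M p f x
    = f x0 * of_real (\<integral>y. minorant_defect p Xk (Xp i) x y \<partial>M)
      - (\<integral>y. f y * of_real (minorant_defect p Xk (Xp i) x y) \<partial>M)"
proof -
  define m where "m y = indicator Xk y * (INF t\<in>Xp i. p t y)" for y
  have [measurable]: "m \<in> borel_measurable M"
    unfolding m_def by measurable
  have int_m: "integrable M m"
    using INF_density_le[OF x] INF_density_nonneg[OF x] x
    by (intro integrable_dominated_by_density[where x = x])
       (auto simp: m_def indicator_def density_nonneg abs_of_nonneg)
  have defect: "minorant_defect p Xk (Xp i) x y = p x y - m y" for y
    by (simp add: minorant_defect_def m_def)
  have mik: "mik M p Xk (Xp i) h = (\<integral>y. h y * of_real (m y) \<partial>M)" for h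
    unfolding mik_def set_lebesgue_integral_def m_def
    by (intro Bochner_Integration.integral_cong) (auto simp: indicator_def)
  have int_fp: "integrable M (\<lambda>y. f y * of_real (p x y))"
    by (rule integrable_bounded_mult[OF f f_le integrable_density])
  have int_fm: "integrable M (\<lambda>y. f y * of_real (m y))"
    by (rule integrable_bounded_mult[OF f f_le int_m])
  have "(\<integral>y. minorant_defect p Xk (Xp i) x y \<partial>M) = 1 - (\<integral>y. m y \<partial>M)"
    unfolding defect using integrable_density int_m by (simp add: integral_density)
  moreover have "(\<integral>y. f y * of_real (minorant_defect p Xk (Xp i) x y) \<partial>M)
      = Pop M p f x - mik M p Xk (Xp i) f"
    unfolding defect mik Pop_def using int_fp int_fm
    by (simp add: right_diff_distrib flip: Bochner_Integration.integral_diff)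
  moreover have "Phat M p x0 Xk I Xp f x - Pop M p f x
      = f x0 * of_real (1 - (\<integral>y. m y \<partial>M)) - (Pop M p f x - mik M p Xk (Xp i) f)"
    by (simp add: Phat_def psi_def Qhat_on_piece[OF I x] mik)
  ultimately show ?thesis
    by simp
qed

lemma norm_Phat_minus_Pop_on_piece:
  assumes "Xk \<in> sets M" "finite I" "disjoint_family_on Xp I" "i \<in> I" "x \<in> Xp i"
    and "(\<lambda>y. INF t\<in>Xp i. p t y) \<in> borel_measurable M"
    and f: "f \<in> borel_measurable M" and f_le: "\<And>y. cmod (f y) \<le> 1"
  shows "cmod (Phat M p x0 Xk I Xp f x - Pop M p f x)
    \<le> 2 * (\<integral>y. minorant_defect p Xk (Xp i) x y \<partial>M)"
proof -
  let ?D = "\<integral>y. minorant_defect p Xk (Xp i) x y \<partial>M"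
  have int_D: "integrable M (minorant_defect p Xk (Xp i) x)"
    using assms(1,6,5) by (rule integrable_minorant_defect)
  have D_nonneg: "0 \<le> ?D"
    using minorant_defect_nonneg[OF assms(5)] by (simp add: integral_nonneg_AE)
  have "cmod (f x0 * of_real ?D) \<le> ?D"
    using D_nonneg f_le[of x0] by (simp add: norm_mult mult_left_le_one_le)
  moreover have "cmod (\<integral>y. f y * of_real (minorant_defect p Xk (Xp i) x y) \<partial>M) \<le> ?D"
    using f f_le int_D minorant_defect_nonneg[OF assms(5)]
    by (rule norm_integral_bounded_mult_le)
  ultimately show ?thesis
    unfolding Phat_minus_Pop_on_piece[OF assms]
    by (intro order_trans[OF norm_triangle_ineq4]) linarith
qed

lemma integral_minorant_defect:
  assumes [measurable]: "Xk \<in> sets M" "(\<lambda>y. INF t\<in>A. p t y) \<in> borel_measurable M"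
    and "x \<in> A"
  shows "(\<integral>y. minorant_defect p Xk A x y \<partial>M)
    = (\<integral>y. indicator Xk y * (p x y - (INF t\<in>A. p t y)) \<partial>M) + Pker M p x (UNIV - Xk)"
proof -
  have int_local: "integrable M (\<lambda>y. indicator Xk y * (p x y - (INF t\<in>A. p t y)))"
    using INF_density_nonneg[OF \<open>x \<in> A\<close>] INF_density_le[OF \<open>x \<in> A\<close>] \<open>x \<in> A\<close>
    by (intro integrable_dominated_by_density[where x = x])
       (auto simp: indicator_def density_nonneg)
  have int_outer: "integrable M (\<lambda>y. indicator (UNIV - Xk) y * p x y)"
    by (intro integrable_dominated_by_density[where x = x])
       (auto simp: density_nonneg indicator_def)
  have "(\<integral>y. minorant_defect p Xk A x y \<partial>M)
      = (\<integral>y. indicator Xk y * (p x y - (INF t\<in>A. p t y)) + indicator (UNIV - Xk) y * p x y \<partial>M)"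
    by (intro Bochner_Integration.integral_cong) (auto simp: minorant_defect_def indicator_def)
  then show ?thesis
    using int_local int_outer by (simp add: Pker_eq_integral Diff_Int_distrib2)
qed

end

locale markov_discretization = markov_density M p
  for M :: "'a::metric_space measure" and p +
  fixes x0 :: 'a and v :: "real \<Rightarrow> real" and r :: real
    and Xk :: "'a set" and I :: "'i set" and Xp :: "'i \<Rightarrow> 'a set" and \<delta> \<theta> :: real
  assumes v_ge1: "\<And>t. 0 \<le> t \<Longrightarrow> 1 \<le> v t" and v_mono: "mono_on {0..} v"
    and r_nonneg: "0 \<le> r"
    and Xk_measurable [measurable]: "Xk \<in> sets M"
    and ball_subset: "{x. dist x x0 < r} \<subseteq> Xk"
    and pieces_finite: "finite I"
    and pieces_disjoint: "disjoint_family_on Xp I"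
    and pieces_cover: "(\<Union>i\<in>I. Xp i) = Xk"
    and pieces_diam: "\<And>i x y. i \<in> I \<Longrightarrow> x \<in> Xp i \<Longrightarrow> y \<in> Xp i \<Longrightarrow> dist x y \<le> \<delta>"
    and INF_measurable: "\<And>i. i \<in> I \<Longrightarrow> (\<lambda>y. INF t\<in>Xp i. p t y) \<in> borel_measurable M"
    and \<delta>_pos: "0 < \<delta>" and \<theta>_pos: "0 < \<theta>"
begin

lemma local_defect_le_ell:
  assumes i: "i \<in> I" and x: "x \<in> Xp i"
  shows "ennreal (\<integral>y. indicator Xk y * (p x y - (INF t\<in>Xp i. p t y)) \<partial>M)
    \<le> ell M p Xk I Xp \<theta> * ennreal (\<delta> powr \<theta>)"
proof -
  define L where "L = (\<integral>y. indicator Xk y * (p x y - (INF t\<in>Xp i. p t y)) \<partial>M)"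
  define q where "q = (\<lambda>y. indicator Xk y * (p x y - (INF t\<in>Xp i. p t y)) / \<delta> powr \<theta>)"
  have [measurable]: "(\<lambda>y. INF t\<in>Xp i. p t y) \<in> borel_measurable M"
    using INF_measurable[OF i] .
  have d_pos: "0 < \<delta> powr \<theta>" using \<delta>_pos by simp
  have q_nonneg: "0 \<le> q y" for y
    using INF_density_le[OF x, of y] d_pos by (simp add: q_def)
  have int_q: "integrable M q"
    using INF_density_nonneg[OF x] INF_density_le[OF x] x unfolding q_def
    by (intro integrable_divide integrable_dominated_by_density[where x = x])
       (auto simp: indicator_def density_nonneg)
  have "ennreal (L / \<delta> powr \<theta>) = (\<integral>\<^sup>+y. ennreal (q y) \<partial>M)"
    using nn_integral_eq_integral[OF int_q] q_nonneg by (simp add: q_def L_def)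
  also have "\<dots> \<le> (\<integral>\<^sup>+y. Lconst p (Xp i) \<theta> y * indicator Xk y \<partial>M)"
    using diff_INF_le_Lconst[where p = p, OF x pieces_diam[OF i] \<delta>_pos \<theta>_pos density_nonneg]
    by (intro nn_integral_mono) (simp add: q_def indicator_def)
  also have "\<dots> \<le> ell M p Xk I Xp \<theta>"
    unfolding ell_def using i pieces_finite by (intro Max_ge) auto
  finally have "ennreal (L / \<delta> powr \<theta>) \<le> ell M p Xk I Xp \<theta>" .
  then have "ennreal (L / \<delta> powr \<theta>) * ennreal (\<delta> powr \<theta>)
      \<le> ell M p Xk I Xp \<theta> * ennreal (\<delta> powr \<theta>)"
    by (rule mult_right_mono) simp
  then show ?thesis
    using d_pos by (simp add: L_def flip: ennreal_mult'')
qed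

lemma Phat_error_outside:
  assumes "f \<in> borel_measurable M" "\<And>y. cmod (f y) \<le> 1" and x: "x \<notin> Xk"
  shows "cmod (Phat M p x0 Xk I Xp f x - Pop M p f x) / v (dist x x0) \<le> 2 * (1 / v r)"
proof -
  have "r \<le> dist x x0"
    using ball_subset x by force
  then have "v r \<le> v (dist x x0)"
    using v_mono r_nonneg by (auto simp: mono_on_def)
  moreover have "1 \<le> v r"
    using v_ge1 r_nonneg by simp
  moreover have "cmod (Phat M p x0 Xk I Xp f x - Pop M p f x) \<le> 2"
    using assms pieces_cover by (intro norm_Phat_minus_Pop_outside_partition) auto
  ultimately show ?thesis
    by (simp add: frac_le)
qed

lemma Phat_error_on_piece:
  assumes f: "f \<in> borel_measurable M" "\<And>y. cmod (f y) \<le> 1" and i: "i \<in> I" and x: "x \<in> Xp i"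
  shows "cmod (Phat M p x0 Xk I Xp f x - Pop M p f x) / v (dist x x0)
    \<le> 2 * (alpha M p (\<lambda>u. v (dist u x0)) Xk
           + (\<integral>y. indicator Xk y * (p x y - (INF t\<in>Xp i. p t y)) \<partial>M))"
proof -
  let ?L = "\<integral>y. indicator Xk y * (p x y - (INF t\<in>Xp i. p t y)) \<partial>M"
  let ?V = "\<lambda>u. v (dist u x0)"
  have V_ge1: "1 \<le> ?V u" for u
    using v_ge1 by simp
  have x_Xk: "x \<in> Xk"
    using pieces_cover i x by blast
  have L_nonneg: "0 \<le> ?L"
    using INF_density_le[OF x] by (intro integral_nonneg_AE) (simp add: indicator_def)
  have "cmod (Phat M p x0 Xk I Xp f x - Pop M p f x) \<le> 2 * (?L + Pker M p x (UNIV - Xk))"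
    using norm_Phat_minus_Pop_on_piece[OF Xk_measurable pieces_finite pieces_disjoint i x
        INF_measurable[OF i] f]
    by (simp add: integral_minorant_defect[OF Xk_measurable INF_measurable[OF i] x])
  then have "cmod (Phat M p x0 Xk I Xp f x - Pop M p f x) / ?V x
      \<le> 2 * (?L + Pker M p x (UNIV - Xk)) / ?V x"
    using V_ge1[of x] by (intro divide_right_mono) auto
  also have "\<dots> = 2 * (?L / ?V x + Pker M p x (UNIV - Xk) / ?V x)"
    by (simp add: add_divide_distrib)
  also have "\<dots> \<le> 2 * (?L + alpha M p ?V Xk)"
  proof -
    have "?L / ?V x \<le> ?L / 1"
      using L_nonneg V_ge1[of x] by (intro divide_left_mono) auto
    then have "?L / ?V x \<le> ?L"
      by simp
    then show ?thesis
      using Pker_div_le_alpha[of ?V, OF V_ge1 x_Xk] by (intro mult_left_mono add_mono) auto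
  qed
  finally show ?thesis
    by (simp add: add.commute)
qed

lemma Phat_error_le:
  assumes "f \<in> borel_measurable M" "\<And>y. cmod (f y) \<le> 1"
  shows "ennreal (cmod (Phat M p x0 Xk I Xp f x - Pop M p f x) / v (dist x x0))
    \<le> ennreal 2 * max (ennreal (1 / v r))
        (ennreal (alpha M p (\<lambda>u. v (dist u x0)) Xk) + ell M p Xk I Xp \<theta> * ennreal (\<delta> powr \<theta>))"
proof (cases "x \<in> Xk")
  case False
  have "ennreal (cmod (Phat M p x0 Xk I Xp f x - Pop M p f x) / v (dist x x0))
      \<le> ennreal (2 * (1 / v r))"
    by (rule ennreal_leI[OF Phat_error_outside[OF assms False]])
  also have "\<dots> = ennreal 2 * ennreal (1 / v r)"
    using v_ge1[OF r_nonneg] by (intro ennreal_mult) auto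
  finally show ?thesis
    by (rule order_trans) (intro mult_left_mono max.cobounded1; simp)
next
  case True
  then obtain i where i: "i \<in> I" and x: "x \<in> Xp i"
    using pieces_cover by blast
  let ?L = "\<integral>y. indicator Xk y * (p x y - (INF t\<in>Xp i. p t y)) \<partial>M"
  let ?\<alpha> = "alpha M p (\<lambda>u. v (dist u x0)) Xk"
  have L_nonneg: "0 \<le> ?L"
    using INF_density_le[OF x] by (intro integral_nonneg_AE) (simp add: indicator_def)
  have \<alpha>_nonneg: "0 \<le> ?\<alpha>"
  proof (rule order_trans[OF _ Pker_div_le_alpha[OF _ True]])
    show "0 \<le> Pker M p x (UNIV - Xk) / v (dist x x0)"
      using v_ge1[of "dist x x0"] by (simp add: Pker_def)
  qed (use v_ge1 in simp)
  have "ennreal (cmod (Phat M p x0 Xk I Xp f x - Pop M p f x) / v (dist x x0))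
      \<le> ennreal (2 * (?\<alpha> + ?L))"
    by (rule ennreal_leI[OF Phat_error_on_piece[OF assms i x]])
  also have "\<dots> = ennreal 2 * (ennreal ?\<alpha> + ennreal ?L)"
    using L_nonneg \<alpha>_nonneg by (simp add: ennreal_mult ennreal_plus)
  also have "\<dots> \<le> ennreal 2 * (ennreal ?\<alpha> + ell M p Xk I Xp \<theta> * ennreal (\<delta> powr \<theta>))"
    using local_defect_le_ell[OF i x] by (intro mult_left_mono add_left_mono) auto
  finally show ?thesis
    by (rule order_trans) (intro mult_left_mono max.cobounded2; simp)
qed

end

theorem lemma2:
  fixes M :: "'a::metric_space measure"
    and p :: "'a \<Rightarrow> 'a \<Rightarrow> real"
    and x0 :: 'a
    and v :: "real \<Rightarrow> real"
    and \<delta> :: "nat \<Rightarrow> real"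
    and X :: "nat \<Rightarrow> 'a set"
    and I :: "nat \<Rightarrow> 'i set"
    and Xp :: "nat \<Rightarrow> 'i \<Rightarrow> 'a set"
    and \<theta> :: real
    and k :: nat
  assumes space_M: "space M = UNIV"
    and sets_M: "sets M = sets borel"
    and p_meas: "(\<lambda>(x, y). p x y) \<in> borel_measurable (M \<Otimes>\<^sub>M M)"
    and p_nonneg: "\<And>x y. 0 \<le> p x y"
    and p_prob: "\<And>x. (\<integral>\<^sup>+y. ennreal (p x y) \<partial>M) = 1"
    and v_ge1: "\<And>t. 0 \<le> t \<Longrightarrow> 1 \<le> v t"
    and v_unbounded: "\<not> bdd_above (v ` {0..})"
    and v_mono: "mono_on {0..} v"
    and v_cont: "continuous_on {0..} v"
    and v0: "v 0 = 1"
    and \<delta>_pos: "\<And>k. 1 \<le> k \<Longrightarrow> 0 < \<delta> k"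
    and X_meas: "\<And>k. 1 \<le> k \<Longrightarrow> X k \<in> sets M"
    and X_lower: "\<And>k. 1 \<le> k \<Longrightarrow> {x. dist x x0 < real k} \<subseteq> X k"
    and X_upper: "\<And>k. 1 \<le> k \<Longrightarrow> X k \<subseteq> {x. dist x x0 \<le> real k}"
    and I_finite: "\<And>k. 1 \<le> k \<Longrightarrow> finite (I k)"
    and part_meas: "\<And>k i. 1 \<le> k \<Longrightarrow> i \<in> I k \<Longrightarrow> Xp k i \<in> sets M"
    and part_nonempty: "\<And>k i. 1 \<le> k \<Longrightarrow> i \<in> I k \<Longrightarrow> Xp k i \<noteq> {}"
    and part_disjoint: "\<And>k i j. 1 \<le> k \<Longrightarrow> i \<in> I k \<Longrightarrow> j \<in> I k \<Longrightarrow> i \<noteq> j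
                          \<Longrightarrow> Xp k i \<inter> Xp k j = {}"
    and part_union: "\<And>k. 1 \<le> k \<Longrightarrow> (\<Union>i\<in>I k. Xp k i) = X k"
    and part_diam: "\<And>k i x y. 1 \<le> k \<Longrightarrow> i \<in> I k \<Longrightarrow> x \<in> Xp k i \<Longrightarrow> y \<in> Xp k i
                          \<Longrightarrow> dist x y \<le> \<delta> k"
    and inf_meas: "\<And>k i. 1 \<le> k \<Longrightarrow> i \<in> I k
                          \<Longrightarrow> (\<lambda>y. INF t\<in>Xp k i. p t y) \<in> borel_measurable M"
    and \<theta>_pos: "0 < \<theta>" and \<theta>_le1: "\<theta> \<le> 1"
    and k_ge1: "1 \<le> k"
  shows "(SUP f\<in>{f. f \<in> borel_measurable M \<and> (\<forall>x. cmod (f x) \<le> 1)}.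
            SUP x. ennreal (cmod (Phat M p x0 (X k) (I k) (Xp k) f x - Pop M p f x)
                             / v (dist x x0)))
         \<le> ennreal 2 * max (ennreal (1 / v (real k)))
             (ennreal (alpha M p (\<lambda>u. v (dist u x0)) (X k))
              + ell M p (X k) (I k) (Xp k) \<theta> * ennreal (\<delta> k powr \<theta>))"
proof -
  have p_section: "p x \<in> borel_measurable M" for x
    using measurable_Pair2[OF p_meas, of x] space_M by simp
  interpret markov_discretization M p x0 v "real k" "X k" "I k" "Xp k" "\<delta> k" \<theta>
    using p_section p_nonneg p_prob v_ge1 v_mono X_meas X_lower I_finite part_disjoint part_union
      part_diam inf_meas \<delta>_pos \<theta>_pos k_ge1
    by unfold_locales (auto simp: disjoint_family_on_def)
  show ?thesis
    using Phat_error_le by (intro SUP_least) auto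
qed

end
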